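(* Let $\mathbb{G}=(\mathbb{P},E)$ be an amenable rough formal context with $\mathbb{P}=(A,X,I)$, and let $R,S\subseteq A\times X$ be the lax and strict approximations of $I$ (defined below). Then $R;R\subseteq R$ and $S\subseteq S;S$, where $;$ is the composition of relations defined below.
   Context: For any relation $T\subseteq U\times V$ and $U'\subseteq U$, $V'\subseteq V$: $T^{(0)}[V']:=\{u\in U\mid \forall v\in V'\,(uTv)\}$ and $T^{(1)}[U']:=\{v\in V\mid \forall u\in U'\,(uTv)\}$; we write $T^{(0)}[v]$ for $T^{(0)}[\{v\}]$ and $T^{(1)}[u]$ for $T^{(1)}[\{u\}]$. A polarity is $\mathbb{P}=(A,X,I)$ with $I\subseteq A\times X$; for $B\subseteq A$, $Y\subseteq X$ put $B^{\uparrow}:=I^{(1)}[B]$ and $Y^{\downarrow}:=I^{(0)}[Y]$. A set $B\subseteq A$ is Galois-stable if $B=B^{\uparrow\downarrow}$; $Y\subseteq X$ is Galois-stable if $Y=Y^{\downarrow\uparrow}$. A relation $T\subseteq A\times X$ is $I$-compatible if $T^{(0)}[x]$ is Galois-stable for every $x\in X$ and $T^{(1)}[a]$ is Galois-stable for every $a\in A$. An equivalence relation $E$ on $A$ is $I$-compatible if the class $(a)_E:=\{b\in A\mid aEb\}$ is Galois-stable for every $a\in A$. A rough formal context is $\mathbb{G}=(\mathbb{P},E)$ with $E$ an equivalence relation on $A$. Its lax and strict approximations are $R,S\subseteq A\times X$: $aRx$ iff $bIx$ for some $b\in(a)_E$; $aSx$ iff $bIx$ for all $b\in(a)_E$. $\mathbb{G}$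 is amenable if $E$, $R$ and $S$ are all $I$-compatible. For $I$-compatible $R,T\subseteq A\times X$, the composition $R;T\subseteq A\times X$ is defined by: for every $x\in X$, $(R;T)^{(0)}[x]=R^{(0)}[I^{(1)}[T^{(0)}[x]]]$ (i.e. $a\,(R;T)\,x$ iff $a\in R^{(0)}[I^{(1)}[T^{(0)}[x]]]$). *)

theory Defs
  imports Main
begin

(* Polarity P = (A, X, I): A is the type 'a, X is the type 'x, I :: ('a \<times> 'x) set. *)

definition rel0 :: "('u \<times> 'v) set \<Rightarrow> 'v set \<Rightarrow> 'u set" where
  "rel0 T V' = {u. \<forall>v\<in>V'. (u, v) \<in> T}"

definition rel1 :: "('u \<times> 'v) set \<Rightarrow> 'u set \<Rightarrow> 'v set" where
  "rel1 T U' = {v. \<forall>u\<in>U'. (u, v) \<in> T}"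

definition galois_stable_A :: "('a \<times> 'x) set \<Rightarrow> 'a set \<Rightarrow> bool" where
  "galois_stable_A I B \<longleftrightarrow> B = rel0 I (rel1 I B)"

definition galois_stable_X :: "('a \<times> 'x) set \<Rightarrow> 'x set \<Rightarrow> bool" where
  "galois_stable_X I Y \<longleftrightarrow> Y = rel1 I (rel0 I Y)"

definition I_compatible :: "('a \<times> 'x) set \<Rightarrow> ('a \<times> 'x) set \<Rightarrow> bool" where
  "I_compatible I T \<longleftrightarrow>
     (\<forall>x. galois_stable_A I (rel0 T {x})) \<and> (\<forall>a. galois_stable_X I (rel1 T {a}))"

definition eq_I_compatible :: "('a \<times> 'x) set \<Rightarrow> ('a \<times> 'a) set \<Rightarrow> bool" where
  "eq_I_compatible I E \<longleftrightarrow> (\<forall>a. galois_stable_A I (E `` {a}))"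

definition lax :: "('a \<times> 'x) set \<Rightarrow> ('a \<times> 'a) set \<Rightarrow> ('a \<times> 'x) set" where
  "lax I E = {(a, x). \<exists>b\<in>E `` {a}. (b, x) \<in> I}"

definition strict :: "('a \<times> 'x) set \<Rightarrow> ('a \<times> 'a) set \<Rightarrow> ('a \<times> 'x) set" where
  "strict I E = {(a, x). \<forall>b\<in>E `` {a}. (b, x) \<in> I}"

definition amenable :: "('a \<times> 'x) set \<Rightarrow> ('a \<times> 'a) set \<Rightarrow> bool" where
  "amenable I E \<longleftrightarrow> eq_I_compatible I E \<and> I_compatible I (lax I E) \<and> I_compatible I (strict I E)"

definition rcomp :: "('a \<times> 'x) set \<Rightarrow> ('a \<times> 'x) set \<Rightarrow> ('a \<times> 'x) set \<Rightarrow> ('a \<times> 'x) set" where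
  "rcomp I R T = {(a, x). a \<in> rel0 R (rel1 I (rel0 T {x}))}"

end

theory Submission
  imports Defs
begin

text \<open>
  For \<open>R\<close> the lax approximation, \<open>a (R;R) x\<close> says that \<open>U := R\<^sup>(\<^sup>1\<^sup>)[a]\<close> contains
  \<open>B\<^sup>\<up>\<close> for \<open>B := R\<^sup>(\<^sup>0\<^sup>)[x]\<close>. By Galois stability of \<open>B\<close> and of the class \<open>(a)\<^sub>E\<close>
  (whose intent lies in \<open>U\<close> by reflexivity), every object of \<open>U\<^sup>\<down>\<close> is \<open>E\<close>-related to \<open>a\<close>
  and \<open>R\<close>-related to \<open>x\<close>, so transitivity of \<open>E\<close> gives \<open>a R x\<close>; if \<open>U\<^sup>\<down>\<close> is empty,
  stability of \<open>U\<close> forces \<open>U\<close> to be everything. For the strict approximation \<open>S\<close>,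
  \<open>a S x\<close> propagates along \<open>E\<close>, so the whole class \<open>(a)\<^sub>E\<close> lies in \<open>S\<^sup>(\<^sup>0\<^sup>)[x]\<close>,
  which is exactly what \<open>a (S;S) x\<close> requires.
\<close>

lemma rel1_empty [simp]: "rel1 T {} = UNIV"
  by (simp add: rel1_def)

lemma in_rcomp_iff: "(a, x) \<in> rcomp I R T \<longleftrightarrow> rel1 I (rel0 T {x}) \<subseteq> rel1 R {a}"
  by (auto simp: rcomp_def rel0_def rel1_def)

lemma galois_stable_X_eq_UNIV_if_rel0_empty:
  assumes "galois_stable_X I Y" and "rel0 I Y = {}"
  shows "Y = UNIV"
  using assms by (simp add: galois_stable_X_def)

lemma rel0_subset_if_rel1_subset:
  assumes "galois_stable_A I B" and "rel1 I B \<subseteq> U"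
  shows "rel0 I U \<subseteq> B"
proof -
  have "rel0 I U \<subseteq> rel0 I (rel1 I B)"
    using assms(2) by (auto simp: rel0_def)
  with assms(1) show ?thesis
    by (simp add: galois_stable_A_def)
qed

lemma rel1_class_subset_lax:
  assumes "refl E"
  shows "rel1 I (E `` {a}) \<subseteq> rel1 (lax I E) {a}"
  using assms by (auto simp: rel1_def lax_def refl_on_def)

lemma lax_Image_closed:
  assumes "trans E" and "(a, c) \<in> E" and "(c, x) \<in> lax I E"
  shows "(a, x) \<in> lax I E"
  using assms by (auto simp: lax_def dest: transD)

lemma strict_Image_closed:
  assumes "trans E" and "(a, b) \<in> E" and "(a, x) \<in> strict I E"
  shows "(b, x) \<in> strict I E"
  using assms by (auto simp: strict_def dest: transD)

lemma rcomp_lax_lax_subset: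
  assumes "refl E" and "trans E" and "eq_I_compatible I E" and "I_compatible I (lax I E)"
  shows "rcomp I (lax I E) (lax I E) \<subseteq> lax I E"
proof safe
  fix a x
  assume "(a, x) \<in> rcomp I (lax I E) (lax I E)"
  define U where "U = rel1 (lax I E) {a}"
  define B where "B = rel0 (lax I E) {x}"
  have B_U: "rel1 I B \<subseteq> U"
    using \<open>(a, x) \<in> rcomp I (lax I E) (lax I E)\<close> by (simp add: in_rcomp_iff U_def B_def)
  show "(a, x) \<in> lax I E"
  proof (cases "rel0 I U = {}")
    case True
    have "galois_stable_X I U"
      using assms(4) by (simp add: I_compatible_def U_def)
    then have "U = UNIV"
      using True by (rule galois_stable_X_eq_UNIV_if_rel0_empty)
    then have "x \<in> U"
      by simp
    then show ?thesis
      by (simp add: U_def rel1_def)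
  next
    case False
    then obtain c where c: "c \<in> rel0 I U"
      by blast
    have "galois_stable_A I B"
      using assms(4) by (simp add: I_compatible_def B_def)
    then have "c \<in> B"
      using B_U c by (rule rel0_subset_if_rel1_subset[THEN subsetD])
    then have "(c, x) \<in> lax I E"
      by (simp add: B_def rel0_def)
    have "galois_stable_A I (E `` {a})"
      using assms(3) by (simp add: eq_I_compatible_def)
    moreover have "rel1 I (E `` {a}) \<subseteq> U"
      unfolding U_def using assms(1) by (rule rel1_class_subset_lax)
    ultimately have "(a, c) \<in> E"
      using c by (blast dest: rel0_subset_if_rel1_subset)
    with assms(2) show ?thesis
      using \<open>(c, x) \<in> lax I E\<close> by (rule lax_Image_closed)
  qed
qed

lemma strict_subset_rcomp_strict:
  assumes "trans E"
  shows "strict I E \<subseteq> rcomp I (strict I E) (strict I E)"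
proof safe
  fix a x
  assume ax: "(a, x) \<in> strict I E"
  have "(b, y) \<in> I" if "y \<in> rel1 I (rel0 (strict I E) {x})" and "(a, b) \<in> E" for b y
  proof -
    have "b \<in> rel0 (strict I E) {x}"
      using strict_Image_closed[OF assms \<open>(a, b) \<in> E\<close> ax] by (simp add: rel0_def)
    with that(1) show ?thesis
      by (simp add: rel1_def)
  qed
  then show "(a, x) \<in> rcomp I (strict I E) (strict I E)"
    by (auto simp: in_rcomp_iff rel1_def strict_def)
qed

theorem mainTheorem2:
  fixes I :: "('a \<times> 'x) set" and E :: "('a \<times> 'a) set"
  assumes "equiv UNIV E"
    and "amenable I E"
  shows "rcomp I (lax I E) (lax I E) \<subseteq> lax I E
       \<and> strict I E \<subseteq> rcomp I (strict I E) (strict I E)"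
proof -
  from assms(1) have "refl E" and "trans E"
    by (simp_all add: equiv_def)
  with assms(2) show ?thesis
    by (simp add: amenable_def rcomp_lax_lax_subset strict_subset_rcomp_strict)
qed

end
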